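(* If $G$ is a bipartite, connected, nontraceable detour graph, then $\Delta(G)\le \left\lceil \frac{\tau(G)-2}{2}\right\rceil$.
   Context: All graphs are finite and simple; the order of a path is its number of vertices. For a vertex $v$, $\tau(v)$ is the order of a longest path in $G$ having $v$ as an endvertex, and $\tau(G)$ is the order of a longest path in $G$. A detour graph is one in which all vertices have the same $\tau(v)$. Nontraceable means having no hamiltonian path. $\Delta(G)$ is the maximum degree. *)

theory Defs
  imports Complex_Main
begin

definition simple_graph :: "'a set \<Rightarrow> ('a \<Rightarrow> 'a \<Rightarrow> bool) \<Rightarrow> bool" where
  "simple_graph V E \<longleftrightarrow> finite V \<and> (\<forall>u v. E u v \<longrightarrow> u \<in> V \<and> v \<in> V)
     \<and> (\<forall>u v. E u v \<longrightarrow> E v u) \<and> (\<forall>v. \<not> E v v)"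

definition is_path :: "'a set \<Rightarrow> ('a \<Rightarrow> 'a \<Rightarrow> bool) \<Rightarrow> 'a list \<Rightarrow> bool" where
  "is_path V E p \<longleftrightarrow> p \<noteq> [] \<and> distinct p \<and> set p \<subseteq> V
     \<and> (\<forall>i. Suc i < length p \<longrightarrow> E (p ! i) (p ! Suc i))"

text \<open>tau v: order of a longest path with v as an endvertex (paths can be reversed,
so w.l.o.g. v is the first vertex).\<close>
definition tau_v :: "'a set \<Rightarrow> ('a \<Rightarrow> 'a \<Rightarrow> bool) \<Rightarrow> 'a \<Rightarrow> nat" where
  "tau_v V E v = Max {length p | p. is_path V E p \<and> hd p = v}"

definition tau :: "'a set \<Rightarrow> ('a \<Rightarrow> 'a \<Rightarrow> bool) \<Rightarrow> nat" where
  "tau V E = Max {length p | p. is_path V E p}"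

definition detour_graph :: "'a set \<Rightarrow> ('a \<Rightarrow> 'a \<Rightarrow> bool) \<Rightarrow> bool" where
  "detour_graph V E \<longleftrightarrow> (\<forall>u\<in>V. \<forall>v\<in>V. tau_v V E u = tau_v V E v)"

definition traceable :: "'a set \<Rightarrow> ('a \<Rightarrow> 'a \<Rightarrow> bool) \<Rightarrow> bool" where
  "traceable V E \<longleftrightarrow> (\<exists>p. is_path V E p \<and> set p = V)"

definition connected_graph :: "'a set \<Rightarrow> ('a \<Rightarrow> 'a \<Rightarrow> bool) \<Rightarrow> bool" where
  "connected_graph V E \<longleftrightarrow> V \<noteq> {} \<and>
     (\<forall>u\<in>V. \<forall>v\<in>V. \<exists>p. is_path V E p \<and> hd p = u \<and> last p = v)"

definition bipartite :: "'a set \<Rightarrow> ('a \<Rightarrow> 'a \<Rightarrow> bool) \<Rightarrow> bool" where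
  "bipartite V E \<longleftrightarrow> (\<exists>A B. A \<union> B = V \<and> A \<inter> B = {} \<and>
     (\<forall>u v. E u v \<longrightarrow> (u \<in> A \<and> v \<in> B) \<or> (u \<in> B \<and> v \<in> A)))"

definition degree :: "'a set \<Rightarrow> ('a \<Rightarrow> 'a \<Rightarrow> bool) \<Rightarrow> 'a \<Rightarrow> nat" where
  "degree V E v = card {u\<in>V. E v u}"

definition max_degree :: "'a set \<Rightarrow> ('a \<Rightarrow> 'a \<Rightarrow> bool) \<Rightarrow> nat" where
  "max_degree V E = Max (degree V E ` V)"

end

theory Submission
  imports Defs
begin

(* In a detour graph every vertex v is an end of a longest path P, of order t = \<tau>(G).
   Maximality of P puts all neighbours of v on P, and bipartiteness puts them at odd
   distance from v along P. The far end of P cannot be a neighbour of v: otherwise P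
   closes to a cycle, and by connectivity a vertex off this cycle (there is one, G being
   nontraceable) would extend the cycle, opened at its neighbour, to a path longer than P.
   Hence v has at most (t - 1) div 2 = \<lceil>(t - 2) / 2\<rceil> neighbours. *)

lemma is_path_iff_successively:
  "is_path V E p \<longleftrightarrow> p \<noteq> [] \<and> distinct p \<and> set p \<subseteq> V \<and> successively E p"
  by (simp add: is_path_def successively_conv_nth)

lemma is_path_singleton: "v \<in> V \<Longrightarrow> is_path V E [v]"
  by (simp add: is_path_def)

lemma is_path_hd_in: "is_path V E p \<Longrightarrow> hd p \<in> V"
  unfolding is_path_def using hd_in_set by blast

lemma is_path_Cons:
  assumes "is_path V E p" "w \<in> V" "w \<notin> set p" "E w (hd p)"
  shows "is_path V E (w # p)"
  using assms by (auto simp: is_path_iff_successively successively_Cons)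

lemma is_path_rotate_closed:
  assumes "is_path V E (xs @ ys)" "E (last (xs @ ys)) (hd (xs @ ys))"
  shows "is_path V E (ys @ xs)"
proof (cases "xs = [] \<or> ys = []")
  case False
  then have "E (last ys) (hd xs)" using assms(2) by simp
  with assms(1) show ?thesis
    by (auto simp: is_path_iff_successively successively_append_iff)
qed (use assms(1) in auto)

lemma closed_path_start_at:
  assumes "is_path V E p" "E (last p) (hd p)" "x \<in> set p"
  obtains q where "is_path V E q" "hd q = x" "set q = set p" "length q = length p"
proof -
  obtain xs ys where p: "p = xs @ x # ys" using split_list[OF assms(3)] by blast
  then have "is_path V E ((x # ys) @ xs)" using assms(1,2) is_path_rotate_closed by metis
  then show ?thesis using that[of "x # ys @ xs"] p by auto
qed

lemma successively_crosses:
  assumes "successively R xs" "xs \<noteq> []" "hd xs \<in> S" "last xs \<notin> S"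
  shows "\<exists>x\<in>set xs. \<exists>y\<in>set xs. R x y \<and> x \<in> S \<and> y \<notin> S"
  using assms
proof (induction xs)
  case (Cons a xs)
  then have "xs \<noteq> []" by auto
  then have step: "R a (hd xs)" "successively R xs" "last (a # xs) = last xs"
    using Cons.prems(1) by (simp_all add: successively_Cons)
  show ?case
  proof (cases "hd xs \<in> S")
    case True
    moreover have "last xs \<notin> S" using Cons.prems(4) step(3) by simp
    ultimately have "\<exists>x\<in>set xs. \<exists>y\<in>set xs. R x y \<and> x \<in> S \<and> y \<notin> S"
      using Cons.IH step(2) \<open>xs \<noteq> []\<close> by blast
    then show ?thesis by auto
  next
    case False
    then show ?thesis using step(1) Cons.prems(3) \<open>xs \<noteq> []\<close> by auto
  qed
qed simp

lemma connected_graph_edge_leaving: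
  assumes "connected_graph V E" "s \<in> S" "S \<subseteq> V" "w \<in> V - S"
  shows "\<exists>x\<in>S. \<exists>y\<in>V - S. E x y"
proof -
  obtain q where q: "is_path V E q" "hd q = s" "last q = w"
    using assms unfolding connected_graph_def by blast
  then show ?thesis
    using successively_crosses[of E q S] assms(2,4)
    by (fastforce simp: is_path_iff_successively)
qed

lemma is_path_length_le_card:
  assumes "simple_graph V E" "is_path V E p"
  shows "length p \<le> card V"
  using assms unfolding simple_graph_def is_path_def
  by (metis card_mono distinct_card)

lemma finite_path_lengths:
  assumes "simple_graph V E"
  shows "finite {length p | p. is_path V E p \<and> P p}"
  using is_path_length_le_card[OF assms]
  by (auto intro: finite_subset[of _ "{..card V}"])

lemma length_le_tau:
  assumes "simple_graph V E" "is_path V E p"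
  shows "length p \<le> tau V E"
  unfolding tau_def using finite_path_lengths[OF assms(1), of "\<lambda>_. True"] assms(2)
  by (auto intro: Max_ge)

lemma length_le_tau_v:
  assumes "simple_graph V E" "is_path V E p"
  shows "length p \<le> tau_v V E (hd p)"
  unfolding tau_v_def using finite_path_lengths[OF assms(1), of "\<lambda>q. hd q = hd p"] assms(2)
  by (auto intro: Max_ge)

lemma tau_attained:
  assumes "simple_graph V E" "v \<in> V"
  obtains p where "is_path V E p" "length p = tau V E"
proof -
  have ne: "{length p | p. is_path V E p} \<noteq> {}"
    using is_path_singleton[OF assms(2)] by blast
  have fin: "finite {length p | p. is_path V E p}"
    using finite_path_lengths[OF assms(1), of "\<lambda>_. True"] by simp
  have "Max {length p | p. is_path V E p} \<in> {length p | p. is_path V E p}"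
    by (rule Max_in[OF fin ne])
  then obtain p where "is_path V E p" "length p = Max {length p | p. is_path V E p}" by auto
  then show ?thesis using that by (simp add: tau_def)
qed

lemma tau_v_attained:
  assumes "simple_graph V E" "v \<in> V"
  obtains p where "is_path V E p" "hd p = v" "length p = tau_v V E v"
proof -
  have "{length p | p. is_path V E p \<and> hd p = v} \<noteq> {}"
    using is_path_singleton[OF assms(2)] by fastforce
  with finite_path_lengths[OF assms(1), of "\<lambda>p. hd p = v"]
  have "Max {length p | p. is_path V E p \<and> hd p = v} \<in> {length p | p. is_path V E p \<and> hd p = v}"
    by (rule Max_in)
  then obtain p where "is_path V E p" "hd p = v"
    "length p = Max {length p | p. is_path V E p \<and> hd p = v}" by auto
  then show ?thesis using that by (simp add: tau_v_def)
qed

definition longest_path :: "'a set \<Rightarrow> ('a \<Rightarrow> 'a \<Rightarrow> bool) \<Rightarrow> 'a list \<Rightarrow> bool" where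
  "longest_path V E p \<longleftrightarrow> is_path V E p \<and> (\<forall>q. is_path V E q \<longrightarrow> length q \<le> length p)"

lemma longest_path_length:
  assumes "simple_graph V E" "longest_path V E p"
  shows "length p = tau V E"
proof -
  have p: "is_path V E p" using assms(2) by (simp add: longest_path_def)
  obtain q where "is_path V E q" "length q = tau V E"
    using tau_attained[OF assms(1) is_path_hd_in[OF p]] by blast
  then have "tau V E \<le> length p" using assms(2) unfolding longest_path_def by metis
  with length_le_tau[OF assms(1) p] show ?thesis by simp
qed

lemma detour_graph_longest_path_from:
  assumes "simple_graph V E" "detour_graph V E" "v \<in> V"
  obtains p where "longest_path V E p" "hd p = v"
proof -
  obtain q where q: "is_path V E q" "length q = tau V E" using tau_attained[OF assms(1,3)] by blast
  have "tau_v V E (hd q) = tau_v V E v"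
    using assms(2,3) is_path_hd_in[OF q(1)] unfolding detour_graph_def by blast
  then have "tau V E \<le> tau_v V E v" using length_le_tau_v[OF assms(1) q(1)] q(2) by simp
  obtain p where p: "is_path V E p" "hd p = v" "length p = tau_v V E v"
    using tau_v_attained[OF assms(1,3)] by blast
  have "longest_path V E p"
    unfolding longest_path_def
    using p \<open>tau V E \<le> tau_v V E v\<close> length_le_tau[OF assms(1)] le_trans by metis
  with p(2) that show ?thesis by blast
qed

lemma longest_path_neighbour_mem:
  assumes "simple_graph V E" "longest_path V E p" "E (hd p) u"
  shows "u \<in> set p"
proof (rule ccontr)
  assume "u \<notin> set p"
  moreover have "u \<in> V" "E u (hd p)" using assms(1,3) by (auto simp: simple_graph_def)
  ultimately have "is_path V E (u # p)" using assms(2) is_path_Cons by (metis longest_path_def)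
  then show False using assms(2) by (fastforce simp: longest_path_def)
qed

lemma longest_closed_path_spans:
  assumes "simple_graph V E" "connected_graph V E" "longest_path V E p" "E (last p) (hd p)"
  shows "set p = V"
proof (rule ccontr)
  assume "set p \<noteq> V"
  have p: "is_path V E p" using assms(3) by (simp add: longest_path_def)
  then have "set p \<subseteq> V" "hd p \<in> set p" by (auto simp: is_path_def)
  then obtain x y where xy: "x \<in> set p" "y \<in> V - set p" "E x y"
    using connected_graph_edge_leaving[OF assms(2)] \<open>set p \<noteq> V\<close> by blast
  obtain q where q: "is_path V E q" "hd q = x" "set q = set p" "length q = length p"
    using closed_path_start_at[OF p assms(4) xy(1)] by blast
  have "E y x" using xy(3) assms(1) by (simp add: simple_graph_def)
  then have "is_path V E (y # q)" using is_path_Cons q xy(2) by fastforce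
  then show False using assms(3) q(4) by (fastforce simp: longest_path_def)
qed

lemma bipartite_path_adjacent_odd:
  assumes "bipartite V E" "is_path V E p" "i < length p" "E (p ! 0) (p ! i)"
  shows "odd i"
proof -
  obtain A B where AB: "A \<inter> B = {}" "\<forall>u v. E u v \<longrightarrow> u \<in> A \<and> v \<in> B \<or> u \<in> B \<and> v \<in> A"
    using assms(1) unfolding bipartite_def by blast
  then have side_flip: "E u w \<Longrightarrow> w \<in> A \<longleftrightarrow> u \<notin> A" for u w by blast
  have "j < length p \<Longrightarrow> p ! j \<in> A \<longleftrightarrow> (p ! 0 \<in> A \<longleftrightarrow> even j)" for j
  proof (induction j)
    case (Suc j)
    then have "E (p ! j) (p ! Suc j)" using assms(2) by (simp add: is_path_def)
    then show ?case using Suc side_flip by auto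
  qed simp
  then show ?thesis using assms(3,4) side_flip by blast
qed

lemma card_odd_less: "card {i::nat. i < n \<and> odd i} = n div 2"
proof (induction n)
  case (Suc n)
  have "{i. i < Suc n \<and> odd i} = (if odd n then insert n else id) {i. i < n \<and> odd i}"
    by (auto simp: less_Suc_eq)
  with Suc show ?case by auto
qed simp

lemma degree_le_longest_path:
  assumes "simple_graph V E" "bipartite V E" "connected_graph V E" "\<not> traceable V E"
    and "longest_path V E p"
  shows "degree V E (hd p) \<le> (length p - 1) div 2"
proof -
  have p: "is_path V E p" using assms(5) by (simp add: longest_path_def)
  then have "p \<noteq> []" by (simp add: is_path_def)
  then have hd_nth: "hd p = p ! 0" by (simp add: hd_conv_nth)
  let ?Odd = "{i. i < length p - 1 \<and> odd i}"
  have "{u \<in> V. E (hd p) u} \<subseteq> (!) p ` ?Odd"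
  proof
    fix u assume u: "u \<in> {u \<in> V. E (hd p) u}"
    then obtain i where i: "i < length p" "p ! i = u"
      using longest_path_neighbour_mem[OF assms(1,5)] by (metis mem_Collect_eq in_set_conv_nth)
    have "odd i" using bipartite_path_adjacent_odd[OF assms(2) p] i u hd_nth by auto
    have "i \<noteq> length p - 1"
    proof
      assume "i = length p - 1"
      then have "E (hd p) (last p)" using u i \<open>p \<noteq> []\<close> by (simp add: last_conv_nth)
      then have "E (last p) (hd p)" using assms(1) by (simp add: simple_graph_def)
      then have "set p = V" using longest_closed_path_spans[OF assms(1,3,5)] by blast
      then show False using assms(4) p by (auto simp: traceable_def)
    qed
    then show "u \<in> (!) p ` ?Odd" using i \<open>odd i\<close> by auto
  qed
  then have "degree V E (hd p) \<le> card ((!) p ` ?Odd)"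
    unfolding degree_def by (simp add: card_mono)
  also have "\<dots> \<le> card ?Odd" by (rule card_image_le) simp
  finally show ?thesis using card_odd_less by simp
qed

lemma ceiling_half_pred:
  assumes "1 \<le> t"
  shows "\<lceil>(real t - 2) / 2\<rceil> = int ((t - 1) div 2)"
proof (cases "even t")
  case True
  with assms obtain m where "t = 2 * Suc m"
    by (metis evenE not0_implies_Suc mult_0_right not_one_le_zero)
  then show ?thesis by (simp add: ceiling_eq_iff)
next
  case False
  then obtain m where "t = 2 * m + 1" using oddE by blast
  then show ?thesis by (simp add: ceiling_eq_iff)
qed

theorem theorem2p27:
  fixes V :: "'a set" and E :: "'a \<Rightarrow> 'a \<Rightarrow> bool"
  assumes "simple_graph V E"
    and "bipartite V E"
    and "connected_graph V E"
    and "\<not> traceable V E"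
    and "detour_graph V E"
  shows "int (max_degree V E) \<le> ceiling ((real (tau V E) - 2) / 2)"
proof -
  have degree_bound: "degree V E v \<le> (tau V E - 1) div 2" if v: "v \<in> V" for v
  proof -
    obtain p where "longest_path V E p" "hd p = v"
      using detour_graph_longest_path_from[OF assms(1,5) v] by blast
    then show ?thesis
      using degree_le_longest_path[OF assms(1-4)] longest_path_length[OF assms(1)] by metis
  qed
  obtain v where "v \<in> V" using assms(3) by (auto simp: connected_graph_def)
  then have "1 \<le> tau V E"
    using length_le_tau[OF assms(1) is_path_singleton] by fastforce
  have "max_degree V E \<in> degree V E ` V"
    unfolding max_degree_def using assms(1) \<open>v \<in> V\<close>
    by (intro Max_in) (auto simp: simple_graph_def)
  then have "max_degree V E \<le> (tau V E - 1) div 2" using degree_bound by auto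
  then show ?thesis using ceiling_half_pred[OF \<open>1 \<le> tau V E\<close>] by simp
qed

end
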